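(* Let $\mathcal P_1$ be a shortest path and $\mathcal P_2$ another path, both between nodes $u_0$ and $u_1$, and write $\delta=\delta_{\mathrm{worst}}(G)$. Define $$\eta_{\mathcal P_1,\mathcal P_2}=(6\delta+2)\log_2\Big((6\mu+2)(6\delta+2)\log_2\big[(6\delta+2)(3\mu+1)\mu\big]+\mu\Big)$$ if $\mathcal P_2$ is $\mu$-approximate short, and $$\eta_{\mathcal P_1,\mathcal P_2}=(6\delta+2)\log_2\Big(8(6\delta+2)\log_2\big[(6\delta+2)(4+2\varepsilon)\big]+1+\tfrac{\varepsilon}{2}\Big)$$ if $\mathcal P_2$ is $\varepsilon$-additive-approximate short. Then: (a) for every node $v$ on $\mathcal P_1$ there is a node $v'$ on $\mathcal P_2$ with $d_{v,v'}\le\lfloor\eta_{\mathcal P_1,\mathcal P_2}\rfloor$; (b) for every node $v'$ on $\mathcal P_2$ there is a node $v$ on $\mathcal P_1$ with $d_{v,v'}\le\zeta_{\mathcal P_1,\mathcal P_2}$, where $\zeta_{\mathcal P_1,\mathcal P_2}=\min\{\lfloor(\mu+1)\eta_{\mathcal P_1,\mathcal P_2}+\mu/2\rfloor,\ \lfloor \mu\, d_{u_0,u_1}/2\rfloor\}$ if $\mathcal P_2$ is $\mu$-approximate short, and $\zeta_{\mathcal P_1,\mathcal P_2}=\min\{\lfloor 2\eta_{\mathcal P_1,\mathcal P_2}+(1+\varepsilon)/2\rfloor,\ \lfloor (d_{u_0,u_1}+\varepsilon)/2\rfloor\}$ if $\mathcal P_2$ is $\varepsilon$-additive-approximate short.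
   Context: $G=(V,E)$ is a finite connected undirected graph with $n\ge 4$ nodes and $d_{u,v}$ denotes the shortest-path distance (number of edges); $\ell(\mathcal P)$ denotes the number of edges of a path $\mathcal P$. For any four nodes $w_1,w_2,w_3,w_4$, form the three sums $d_{w_1,w_2}+d_{w_3,w_4}$, $d_{w_1,w_3}+d_{w_2,w_4}$, $d_{w_1,w_4}+d_{w_2,w_3}$, order them as $S\le M\le L$, and set $\delta_{w_1,w_2,w_3,w_4}=(L-M)/2$; $\delta_{\mathrm{worst}}(G)=\max_{w_1,w_2,w_3,w_4\in V}\delta_{w_1,w_2,w_3,w_4}$. A path $(w_0,w_1,\dots,w_k)$ is $\mu$-approximate short (with $\mu\ge1$) if for all $0\le i<j\le k$ the length of its subpath from $w_i$ to $w_j$ is at most $\mu\, d_{w_i,w_j}$. It is $\varepsilon$-additive-approximate short (with $\varepsilon\ge0$) if its length is at most $d_{w_0,w_k}+\varepsilon$. *)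

theory Defs
  imports Complex_Main
begin

definition graph :: "'a set \<Rightarrow> ('a \<Rightarrow> 'a \<Rightarrow> bool) \<Rightarrow> bool" where
  "graph V E \<longleftrightarrow> finite V \<and> (\<forall>u v. E u v \<longrightarrow> u \<in> V \<and> v \<in> V)
     \<and> (\<forall>u v. E u v \<longrightarrow> E v u) \<and> (\<forall>u. \<not> E u u)"

definition is_walk :: "'a set \<Rightarrow> ('a \<Rightarrow> 'a \<Rightarrow> bool) \<Rightarrow> 'a list \<Rightarrow> bool" where
  "is_walk V E xs \<longleftrightarrow> xs \<noteq> [] \<and> set xs \<subseteq> V \<and>
     (\<forall>i. Suc i < length xs \<longrightarrow> E (xs ! i) (xs ! Suc i))"

definition is_path :: "'a set \<Rightarrow> ('a \<Rightarrow> 'a \<Rightarrow> bool) \<Rightarrow> 'a list \<Rightarrow> bool" where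
  "is_path V E xs \<longleftrightarrow> is_walk V E xs \<and> distinct xs"

definition plen :: "'a list \<Rightarrow> nat" where
  "plen xs = length xs - 1"

definition connected_graph :: "'a set \<Rightarrow> ('a \<Rightarrow> 'a \<Rightarrow> bool) \<Rightarrow> bool" where
  "connected_graph V E \<longleftrightarrow> (\<forall>u\<in>V. \<forall>v\<in>V. \<exists>xs. is_walk V E xs \<and> hd xs = u \<and> last xs = v)"

definition gdist :: "'a set \<Rightarrow> ('a \<Rightarrow> 'a \<Rightarrow> bool) \<Rightarrow> 'a \<Rightarrow> 'a \<Rightarrow> nat" where
  "gdist V E u v = (LEAST k. \<exists>xs. is_walk V E xs \<and> hd xs = u \<and> last xs = v \<and> plen xs = k)"

definition delta4 :: "'a set \<Rightarrow> ('a \<Rightarrow> 'a \<Rightarrow> bool) \<Rightarrow> 'a \<Rightarrow> 'a \<Rightarrow> 'a \<Rightarrow> 'a \<Rightarrow> real" where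
  "delta4 V E w1 w2 w3 w4 =
    (let s1 = gdist V E w1 w2 + gdist V E w3 w4;
         s2 = gdist V E w1 w3 + gdist V E w2 w4;
         s3 = gdist V E w1 w4 + gdist V E w2 w3;
         L = max s1 (max s2 s3);
         S = min s1 (min s2 s3);
         M = s1 + s2 + s3 - L - S
     in (real L - real M) / 2)"

definition delta_worst :: "'a set \<Rightarrow> ('a \<Rightarrow> 'a \<Rightarrow> bool) \<Rightarrow> real" where
  "delta_worst V E = Max {delta4 V E w1 w2 w3 w4 | w1 w2 w3 w4. w1 \<in> V \<and> w2 \<in> V \<and> w3 \<in> V \<and> w4 \<in> V}"

definition mu_approx_short :: "'a set \<Rightarrow> ('a \<Rightarrow> 'a \<Rightarrow> bool) \<Rightarrow> real \<Rightarrow> 'a list \<Rightarrow> bool" where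
  "mu_approx_short V E \<mu> xs \<longleftrightarrow>
     (\<forall>i j. i < j \<and> j < length xs \<longrightarrow> real (j - i) \<le> \<mu> * real (gdist V E (xs ! i) (xs ! j)))"

definition eps_additive_short :: "'a set \<Rightarrow> ('a \<Rightarrow> 'a \<Rightarrow> bool) \<Rightarrow> real \<Rightarrow> 'a list \<Rightarrow> bool" where
  "eps_additive_short V E \<epsilon> xs \<longleftrightarrow> real (plen xs) \<le> real (gdist V E (hd xs) (last xs)) + \<epsilon>"

definition eta_mu :: "real \<Rightarrow> real \<Rightarrow> real" where
  "eta_mu \<delta> \<mu> = (6*\<delta>+2) * log 2 ((6*\<mu>+2)*(6*\<delta>+2) * log 2 ((6*\<delta>+2)*(3*\<mu>+1)*\<mu>) + \<mu>)"

definition eta_eps :: "real \<Rightarrow> real \<Rightarrow> real" where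
  "eta_eps \<delta> \<epsilon> = (6*\<delta>+2) * log 2 (8*(6*\<delta>+2) * log 2 ((6*\<delta>+2)*(4+2*\<epsilon>)) + 1 + \<epsilon>/2)"

end

theory Submission
  imports Defs
begin

text \<open>Let \<open>D\<close> be the largest distance from a vertex of the geodesic \<open>P\<^sub>1\<close> to the path \<open>P\<^sub>2\<close>,
  attained at \<open>P\<^sub>1 ! k\<close>. Leaving \<open>P\<^sub>1\<close> at distance \<open>2D\<close> before and after \<open>k\<close> and
  jumping to nearby vertices of \<open>P\<^sub>2\<close> yields a detour whose vertices all stay at distance at
  least \<open>D\<close> from \<open>P\<^sub>1 ! k\<close>; every consecutive pair therefore has Gromov product about \<open>D\<close>
  at \<open>P\<^sub>1 ! k\<close>, while the two ends, lying on a geodesic through \<open>P\<^sub>1 ! k\<close>, have product \<open>0\<close>.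
  Bisecting the detour, the four-point condition loses \<open>\<delta>\<close> per halving, so
  \<open>D \<le> 1/2 + \<delta> (log\<^sub>2 L + 1)\<close>, and shortness of \<open>P\<^sub>2\<close> bounds the detour length \<open>L\<close>
  linearly in \<open>D\<close>. The resulting implicit inequality forces \<open>D \<le> \<eta>\<close>. Conversely, a vertex of
  \<open>P\<^sub>2\<close> lies between the \<open>P\<^sub>2\<close>-neighbours of two adjacent vertices of \<open>P\<^sub>1\<close>, and shortness
  bounds the gap between those neighbours.\<close>

lemma log2_le_twice_pred:
  fixes x :: real
  assumes "1 \<le> x"
  shows "log 2 x \<le> 2 * (x - 1)"
proof -
  have "- ln 2 \<le> (1/2 :: real) - 1"
    using ln_le_minus_one[of "1/2 :: real"] by (simp add: ln_div)
  then have "ln x / ln 2 \<le> ln x / (1/2)"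
    using assms by (intro divide_left_mono) auto
  also have "\<dots> \<le> 2 * (x - 1)"
    using ln_le_minus_one[of x] assms by simp
  finally show ?thesis
    by (simp add: log_def)
qed

lemma le_of_log_fixpoint:
  fixes \<delta> \<alpha> \<beta> D \<eta> :: real
  assumes \<delta>: "0 \<le> \<delta>" and \<alpha>: "0 \<le> \<alpha>" and \<beta>: "0 < \<beta>" and \<eta>: "0 < \<eta>" "4 * \<delta> \<le> \<eta>"
    and D_le: "D \<le> 1/2 + \<delta> + \<delta> * log 2 (\<alpha> * D + \<beta>)"
    and \<eta>_ge: "1/2 + \<delta> + \<delta> * log 2 (\<alpha> * \<eta> + \<beta>) \<le> \<eta>"
  shows "D \<le> \<eta>"
proof (rule ccontr)
  assume "\<not> D \<le> \<eta>"
  then have D: "\<eta> < D" by simp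
  define A where "A = \<alpha> * D + \<beta>"
  define B where "B = \<alpha> * \<eta> + \<beta>"
  have B: "0 < B" "\<alpha> * \<eta> \<le> B" "B \<le> A"
    unfolding A_def B_def using \<alpha> \<beta> \<eta> D
    by (auto intro: mult_left_mono add_nonneg_pos mult_nonneg_nonneg)
  have "log 2 A - log 2 B = log 2 (A / B)"
    using B by (simp add: log_divide)
  also have "\<dots> \<le> 2 * (A / B - 1)"
    using B by (intro log2_le_twice_pred) simp
  also have "A / B - 1 = \<alpha> * (D - \<eta>) / B"
    using B unfolding A_def B_def by (simp add: field_simps)
  also have "\<dots> = (\<alpha> / B) * (D - \<eta>)"
    by simp
  also have "\<dots> \<le> (1 / \<eta>) * (D - \<eta>)"
    using B \<eta> D by (intro mult_right_mono) (simp_all add: divide_simps)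
  finally have "\<delta> * (log 2 A - log 2 B) \<le> \<delta> * (2 * ((1 / \<eta>) * (D - \<eta>)))"
    using \<delta> by (intro mult_left_mono) auto
  also have "\<dots> = (2 * \<delta> / \<eta>) * (D - \<eta>)"
    by (simp add: field_simps)
  also have "\<dots> \<le> 1/2 * (D - \<eta>)"
    using \<eta> D by (intro mult_right_mono) (simp_all add: divide_simps)
  finally show False
    using D D_le \<eta>_ge unfolding A_def B_def by (simp add: algebra_simps)
qed

lemma log_fixpoint_conditions:
  fixes \<delta> \<mu> r Z :: real
  assumes \<delta>: "0 \<le> \<delta>" and \<mu>: "0 \<le> \<mu>" and Z: "32 \<le> Z" "12 * \<mu> * (6 * \<delta> + 2) \<le> Z"
    and r: "0 < r" "r \<le> 2 * Z"
  defines "\<eta> \<equiv> (6 * \<delta> + 2) * log 2 Z"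
  shows "0 < \<eta>" and "4 * \<delta> \<le> \<eta>" and "1/2 + \<delta> + \<delta> * log 2 (6 * \<mu> * \<eta> + r) \<le> \<eta>"
proof -
  have log_Z: "5 \<le> log 2 Z"
    using le_log_of_power[of 2 5 Z] Z(1) by simp
  show "0 < \<eta>" "4 * \<delta> \<le> \<eta>"
    unfolding \<eta>_def using \<delta> log_Z mult_left_mono[OF log_Z, of "6 * \<delta> + 2"] by auto
  have "6 * \<mu> * (6 * \<delta> + 2) * log 2 Z \<le> 6 * \<mu> * (6 * \<delta> + 2) * (2 * Z)"
    using \<mu> \<delta> log2_le_twice_pred[of Z] Z(1) by (intro mult_left_mono) auto
  then have "6 * \<mu> * \<eta> + r \<le> 6 * \<mu> * (6 * \<delta> + 2) * (2 * Z) + 2 * Z"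
    unfolding \<eta>_def using r(2) by (simp add: algebra_simps)
  also have "\<dots> \<le> Z * Z + 2 * Z"
    using Z by (simp add: mult_right_mono)
  also have "\<dots> \<le> Z ^ 3"
  proof -
    have "2 * Z \<le> Z * Z" "2 * (Z * Z) \<le> Z * (Z * Z)"
      using Z(1) by (intro mult_right_mono; simp)+
    then show ?thesis
      by (simp add: power3_eq_cube)
  qed
  finally have "log 2 (6 * \<mu> * \<eta> + r) \<le> log 2 (Z ^ 3)"
    using \<mu> \<open>0 < \<eta>\<close> r(1) by (intro log_mono) (auto intro: add_nonneg_pos)
  also have "\<dots> = 3 * log 2 Z"
    using Z(1) by (simp add: log_nat_power)
  finally have "\<delta> * log 2 (6 * \<mu> * \<eta> + r) \<le> \<delta> * (3 * log 2 Z)"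
    using \<delta> by (intro mult_left_mono)
  moreover have "1/2 + \<delta> \<le> (3 * \<delta> + 2) * log 2 Z"
    using \<delta> mult_left_mono[OF log_Z, of "3 * \<delta> + 2"] by simp
  moreover have "\<eta> = \<delta> * (3 * log 2 Z) + (3 * \<delta> + 2) * log 2 Z"
    unfolding \<eta>_def by (simp add: algebra_simps)
  ultimately show "1/2 + \<delta> + \<delta> * log 2 (6 * \<mu> * \<eta> + r) \<le> \<eta>"
    using \<delta> by linarith
qed

lemma eta_mu_conditions:
  fixes \<delta> \<mu> :: real
  assumes \<delta>: "0 \<le> \<delta>" and \<mu>: "1 \<le> \<mu>"
  shows "0 < eta_mu \<delta> \<mu>" "4 * \<delta> \<le> eta_mu \<delta> \<mu>"
    "1/2 + \<delta> + \<delta> * log 2 (6 * \<mu> * eta_mu \<delta> \<mu> + 2) \<le> eta_mu \<delta> \<mu>"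
proof -
  define K where "K = 6 * \<delta> + 2"
  define l where "l = log 2 (K * (3 * \<mu> + 1) * \<mu>)"
  have K: "2 \<le> K"
    unfolding K_def using \<delta> by simp
  have "2 * 4 * 1 \<le> K * (3 * \<mu> + 1) * \<mu>"
    using K \<mu> by (intro mult_mono) auto
  then have l: "3 \<le> l"
    unfolding l_def using le_log_of_power[of 2 3] by simp
  have "(6 * \<mu>) * K * 3 \<le> (6 * \<mu> + 2) * K * l"
    using K \<mu> l by (intro mult_mono) auto
  moreover have "8 * 2 * 3 \<le> (6 * \<mu> + 2) * K * l"
    using K \<mu> l by (intro mult_mono) auto
  ultimately show "0 < eta_mu \<delta> \<mu>" "4 * \<delta> \<le> eta_mu \<delta> \<mu>"
    "1/2 + \<delta> + \<delta> * log 2 (6 * \<mu> * eta_mu \<delta> \<mu> + 2) \<le> eta_mu \<delta> \<mu>"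
    using log_fixpoint_conditions[OF \<delta>, of \<mu> "(6 * \<mu> + 2) * K * l + \<mu>" 2] \<mu>
    unfolding eta_mu_def K_def l_def by (simp_all add: algebra_simps)
qed

lemma eta_eps_conditions:
  fixes \<delta> \<epsilon> :: real
  assumes \<delta>: "0 \<le> \<delta>" and \<epsilon>: "0 \<le> \<epsilon>"
  shows "0 < eta_eps \<delta> \<epsilon>" "4 * \<delta> \<le> eta_eps \<delta> \<epsilon>"
    "1/2 + \<delta> + \<delta> * log 2 (6 * eta_eps \<delta> \<epsilon> + \<epsilon> + 2) \<le> eta_eps \<delta> \<epsilon>"
proof -
  define K where "K = 6 * \<delta> + 2"
  define l where "l = log 2 (K * (4 + 2 * \<epsilon>))"
  have K: "2 \<le> K"
    unfolding K_def using \<delta> by simp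
  have "2 * 4 \<le> K * (4 + 2 * \<epsilon>)"
    using K \<epsilon> by (intro mult_mono) auto
  then have l: "3 \<le> l"
    unfolding l_def using le_log_of_power[of 2 3] by simp
  have "8 * K * 3 \<le> 8 * K * l"
    using K l by (intro mult_left_mono) auto
  then show "0 < eta_eps \<delta> \<epsilon>" "4 * \<delta> \<le> eta_eps \<delta> \<epsilon>"
    "1/2 + \<delta> + \<delta> * log 2 (6 * eta_eps \<delta> \<epsilon> + \<epsilon> + 2) \<le> eta_eps \<delta> \<epsilon>"
    using log_fixpoint_conditions[OF \<delta>, of 1 "8 * K * l + 1 + \<epsilon> / 2" "\<epsilon> + 2"] K \<epsilon>
    unfolding eta_eps_def K_def l_def by (simp_all add: algebra_simps)
qed

locale graph_metric =
  fixes V :: "'a set" and E :: "'a \<Rightarrow> 'a \<Rightarrow> bool"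
  assumes graph: "graph V E" and connected: "connected_graph V E"
begin

abbreviation d :: "'a \<Rightarrow> 'a \<Rightarrow> nat" where "d \<equiv> gdist V E"

lemma edge_sym: "E u v \<Longrightarrow> E v u"
  using graph unfolding graph_def by blast

lemma edge_in_V: "E u v \<Longrightarrow> u \<in> V \<and> v \<in> V"
  using graph unfolding graph_def by blast

lemma is_walk_Cons:
  "is_walk V E (x # xs) \<longleftrightarrow> x \<in> V \<and> (xs = [] \<or> E x (hd xs) \<and> is_walk V E xs)"
proof (cases xs)
  case (Cons y ys)
  have "(\<forall>i. Suc i < length (x # xs) \<longrightarrow> E ((x # xs) ! i) ((x # xs) ! Suc i)) \<longleftrightarrow>
        E x y \<and> (\<forall>i. Suc i < length xs \<longrightarrow> E (xs ! i) (xs ! Suc i))"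
    using Cons by (auto simp: nth_Cons split: nat.splits)
  then show ?thesis
    using Cons edge_in_V unfolding is_walk_def by auto
qed (simp add: is_walk_def)

lemma is_walk_append:
  "is_walk V E xs \<Longrightarrow> is_walk V E ys \<Longrightarrow> last xs = hd ys \<Longrightarrow> is_walk V E (xs @ tl ys)"
proof (induction xs)
  case (Cons x xs)
  show ?case
  proof (cases "xs = []")
    case True
    then show ?thesis
      using Cons.prems by (cases ys) (auto simp: is_walk_Cons)
  next
    case False
    then show ?thesis
      using Cons.IH Cons.prems by (auto simp: is_walk_Cons)
  qed
qed (simp add: is_walk_def)

lemma is_walk_rev: "is_walk V E xs \<Longrightarrow> is_walk V E (rev xs)"
proof (induction xs)
  case (Cons x xs)
  show ?case
  proof (cases "xs = []")
    case False
    then have "is_walk V E [hd xs, x]"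
      using Cons.prems edge_in_V by (auto simp: is_walk_Cons intro: edge_sym)
    then have "is_walk V E (rev xs @ tl [hd xs, x])"
      using Cons.IH Cons.prems False by (intro is_walk_append) (auto simp: is_walk_Cons last_rev)
    then show ?thesis
      by simp
  qed (use Cons.prems in \<open>simp add: is_walk_Cons\<close>)
qed (simp add: is_walk_def)

lemma gdist_le_plen: "is_walk V E xs \<Longrightarrow> d (hd xs) (last xs) \<le> plen xs"
  unfolding gdist_def by (rule Least_le) blast

lemma shortest_walk_exists:
  assumes "u \<in> V" "v \<in> V"
  obtains xs where "is_walk V E xs" "hd xs = u" "last xs = v" "plen xs = d u v"
proof -
  have "\<exists>xs. is_walk V E xs \<and> hd xs = u \<and> last xs = v"
    using connected assms unfolding connected_graph_def by blast
  then have "\<exists>k xs. is_walk V E xs \<and> hd xs = u \<and> last xs = v \<and> plen xs = k"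
    by blast
  then have "\<exists>xs. is_walk V E xs \<and> hd xs = u \<and> last xs = v \<and> plen xs = d u v"
    unfolding gdist_def by (rule LeastI_ex)
  then show ?thesis
    using that by blast
qed

lemma gdist_sym_le:
  assumes "u \<in> V" "v \<in> V"
  shows "d v u \<le> d u v"
proof -
  obtain xs where xs: "is_walk V E xs" "hd xs = u" "last xs = v" "plen xs = d u v"
    using shortest_walk_exists[OF assms] by blast
  then have "xs \<noteq> []"
    by (auto simp: is_walk_def)
  then show ?thesis
    using gdist_le_plen[OF is_walk_rev[OF xs(1)]] xs by (simp add: hd_rev last_rev plen_def)
qed

lemma gdist_sym: "u \<in> V \<Longrightarrow> v \<in> V \<Longrightarrow> d u v = d v u"
  using gdist_sym_le le_antisym by blast

lemma gdist_self: "u \<in> V \<Longrightarrow> d u u = 0"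
  using gdist_le_plen[of "[u]"] by (simp add: is_walk_def plen_def)

lemma gdist_triangle:
  assumes "u \<in> V" "v \<in> V" "w \<in> V"
  shows "d u w \<le> d u v + d v w"
proof -
  obtain xs where xs: "is_walk V E xs" "hd xs = u" "last xs = v" "plen xs = d u v"
    using shortest_walk_exists[OF assms(1,2)] by blast
  obtain ys where ys: "is_walk V E ys" "hd ys = v" "last ys = w" "plen ys = d v w"
    using shortest_walk_exists[OF assms(2,3)] by blast
  have ne: "xs \<noteq> []" "ys \<noteq> []"
    using xs ys by (auto simp: is_walk_def)
  have "d (hd (xs @ tl ys)) (last (xs @ tl ys)) \<le> plen (xs @ tl ys)"
    using xs ys by (intro gdist_le_plen is_walk_append) auto
  moreover have "hd (xs @ tl ys) = u"
    using xs ne by simp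
  moreover have "plen (xs @ tl ys) = plen xs + plen ys"
    using ne by (cases xs) (auto simp: plen_def)
  moreover have "last (xs @ tl ys) = w"
    using xs ys ne by (cases ys) (auto simp: last_append)
  ultimately show ?thesis
    using xs(4) ys(4) by simp
qed

lemma gdist_triangle3:
  assumes "u \<in> V" "v \<in> V" "w \<in> V" "x \<in> V"
  shows "d u x \<le> d u v + d v w + d w x"
  using gdist_triangle[of u v x] gdist_triangle[of v w x] assms by simp

lemma gdist_nth_le:
  assumes "is_walk V E xs" "i \<le> j" "j < length xs"
  shows "d (xs ! i) (xs ! j) \<le> j - i"
proof -
  define ys where "ys = drop i (take (Suc j) xs)"
  have "set ys \<subseteq> set xs"
    unfolding ys_def by (meson in_set_dropD in_set_takeD subsetI)
  then have "is_walk V E ys"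
    using assms unfolding is_walk_def ys_def by auto
  have len: "length ys = Suc (j - i)"
    using assms unfolding ys_def by simp
  then have "ys \<noteq> []"
    by auto
  then have "hd ys = ys ! 0" "last ys = ys ! (j - i)"
    using len by (simp_all add: hd_conv_nth last_conv_nth)
  then have "hd ys = xs ! i" "last ys = xs ! j"
    using assms unfolding ys_def by auto
  moreover have "plen ys = j - i"
    using len by (simp add: plen_def)
  ultimately show ?thesis
    using gdist_le_plen[OF \<open>is_walk V E ys\<close>] by simp
qed

end

lemma three_sums_gap:
  fixes s1 s2 s3 :: nat
  defines "L \<equiv> max s1 (max s2 s3)"
    and "M \<equiv> s1 + s2 + s3 - max s1 (max s2 s3) - min s1 (min s2 s3)"
  shows "real M \<le> real L" and "real s1 \<le> real (max s2 s3) + (real L - real M)"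
  unfolding L_def M_def by (auto simp: max_def min_def)

context graph_metric
begin

abbreviation \<delta> :: real where "\<delta> \<equiv> delta_worst V E"

lemma delta4_le_delta_worst:
  assumes "w1 \<in> V" "w2 \<in> V" "w3 \<in> V" "w4 \<in> V"
  shows "delta4 V E w1 w2 w3 w4 \<le> \<delta>"
proof -
  let ?D = "{delta4 V E w1 w2 w3 w4 | w1 w2 w3 w4. w1 \<in> V \<and> w2 \<in> V \<and> w3 \<in> V \<and> w4 \<in> V}"
  have "?D = (\<lambda>(w1, w2, w3, w4). delta4 V E w1 w2 w3 w4) ` (V \<times> V \<times> V \<times> V)"
    by (auto simp: image_iff) blast
  moreover have "finite V"
    using graph unfolding graph_def by blast
  ultimately have "finite ?D"
    by simp
  then show ?thesis
    unfolding delta_worst_def by (rule Max_ge) (use assms in blast)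
qed

lemma delta_worst_nonneg: "w \<in> V \<Longrightarrow> 0 \<le> \<delta>"
  using delta4_le_delta_worst[of w w w w] three_sums_gap(1)
  by (fastforce simp: delta4_def Let_def)

lemma four_point_condition:
  assumes "x \<in> V" "y \<in> V" "z \<in> V" "p \<in> V"
  shows "real (d x z + d y p) \<le> real (max (d x y + d z p) (d x p + d z y)) + 2 * \<delta>"
  using three_sums_gap(2)[of "d x z + d y p" "d x y + d z p" "d x p + d z y"]
    delta4_le_delta_worst[of x z y p] assms
  by (simp add: delta4_def Let_def)

definition gromov_product :: "'a \<Rightarrow> 'a \<Rightarrow> 'a \<Rightarrow> real" where
  "gromov_product p x y = (real (d p x) + real (d p y) - real (d x y)) / 2"

lemma gromov_product_commute: "x \<in> V \<Longrightarrow> y \<in> V \<Longrightarrow> gromov_product p x y = gromov_product p y x"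
  unfolding gromov_product_def by (simp add: gdist_sym)

lemma gromov_product_min_le:
  assumes "x \<in> V" "y \<in> V" "z \<in> V" "p \<in> V"
  shows "min (gromov_product p x y) (gromov_product p y z) - \<delta> \<le> gromov_product p x z"
proof -
  have "real (d x z + d p y) \<le> real (max (d x y + d p z) (d p x + d y z)) + 2 * \<delta>"
    using four_point_condition[OF assms] assms by (simp add: gdist_sym)
  then show ?thesis
    unfolding gromov_product_def by (auto simp: max_def min_def field_simps split: if_splits)
qed

lemma gromov_product_chain:
  assumes p: "p \<in> V"
    and "\<And>i. a \<le> i \<Longrightarrow> i \<le> b \<Longrightarrow> x i \<in> V"
    and "\<And>i. a \<le> i \<Longrightarrow> i < b \<Longrightarrow> m \<le> gromov_product p (x i) (x (Suc i))"
    and "a < b" "b - a \<le> 2 ^ k"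
  shows "m - \<delta> * k \<le> gromov_product p (x a) (x b)"
  using assms(2-)
proof (induction k arbitrary: a b)
  case 0
  then have "b = Suc a"
    by simp
  then show ?case
    using "0.prems"(2)[of a] by simp
next
  case (Suc k)
  have \<delta>: "0 \<le> \<delta>"
    using delta_worst_nonneg[OF p] .
  show ?case
  proof (cases "b - a \<le> 2 ^ k")
    case True
    then have "m - \<delta> * k \<le> gromov_product p (x a) (x b)"
      using Suc by blast
    then show ?thesis
      using \<delta> by (simp add: algebra_simps)
  next
    case False
    define c where "c = a + 2 ^ k"
    have c: "a < c" "c < b" "c - a \<le> 2 ^ k" "b - c \<le> 2 ^ k"
      using False Suc.prems(4) unfolding c_def by auto
    have "m - \<delta> * k \<le> gromov_product p (x a) (x c)"
      by (rule Suc.IH) (use Suc.prems c in auto)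
    moreover have "m - \<delta> * k \<le> gromov_product p (x c) (x b)"
      by (rule Suc.IH) (use Suc.prems c in auto)
    moreover have "min (gromov_product p (x a) (x c)) (gromov_product p (x c) (x b)) - \<delta>
        \<le> gromov_product p (x a) (x b)"
      by (rule gromov_product_min_le) (use Suc.prems c p in auto)
    ultimately show ?thesis
      by (auto simp: algebra_simps)
  qed
qed

lemma gromov_product_chain_log:
  assumes p: "p \<in> V"
    and "\<And>i. i \<le> L \<Longrightarrow> x i \<in> V"
    and "\<And>i. i < L \<Longrightarrow> m \<le> gromov_product p (x i) (x (Suc i))"
    and L: "0 < L"
  shows "m - \<delta> * (log 2 L + 1) \<le> gromov_product p (x 0) (x L)"
proof -
  define k where "k = nat \<lceil>log 2 L\<rceil>"
  have log: "0 \<le> log 2 L"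
    using L by simp
  have "real L \<le> 2 powr k"
    using L log unfolding k_def by (subst log_le_iff[symmetric]) auto
  then have "L \<le> 2 ^ k"
    by (simp add: powr_realpow flip: of_nat_le_iff)
  then have "m - \<delta> * k \<le> gromov_product p (x 0) (x L)"
    using assms by (intro gromov_product_chain) auto
  moreover have "\<delta> * k \<le> \<delta> * (log 2 L + 1)"
    using log delta_worst_nonneg[OF p] unfolding k_def by (intro mult_left_mono) linarith+
  ultimately show ?thesis
    by linarith
qed

lemma mu_approx_short_subpath:
  assumes "mu_approx_short V E \<mu> xs" "0 \<le> \<mu>" "s \<le> t" "t < length xs"
  shows "real (t - s) \<le> \<mu> * d (xs ! s) (xs ! t)"
  using assms by (cases "s = t") (auto simp: mu_approx_short_def)

lemma eps_additive_short_subpath: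
  fixes \<epsilon> :: real
  assumes "is_walk V E xs" "eps_additive_short V E \<epsilon> xs" "s \<le> t" "t < length xs"
  shows "real (t - s) \<le> d (xs ! s) (xs ! t) + \<epsilon>"
proof -
  define k where "k = length xs - 1"
  have "xs \<noteq> []" "set xs \<subseteq> V"
    using assms(1) by (auto simp: is_walk_def)
  then have k: "length xs = Suc k" "hd xs = xs ! 0" "last xs = xs ! k"
    and V: "xs ! 0 \<in> V" "xs ! s \<in> V" "xs ! t \<in> V" "xs ! k \<in> V"
    using assms(3,4) unfolding k_def by (auto simp: hd_conv_nth last_conv_nth)
  have "real k \<le> d (xs ! 0) (xs ! k) + \<epsilon>"
    using assms(2) k unfolding eps_additive_short_def plen_def by simp
  also have "d (xs ! 0) (xs ! k) \<le> d (xs ! 0) (xs ! s) + d (xs ! s) (xs ! t) + d (xs ! t) (xs ! k)"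
    using gdist_triangle3 V by blast
  also have "\<dots> \<le> s + d (xs ! s) (xs ! t) + (k - t)"
    using gdist_nth_le[OF assms(1), of 0 s] gdist_nth_le[OF assms(1), of t k] assms(3,4) k by simp
  finally show ?thesis
    using assms(3,4) k by simp
qed

lemma gromov_product_ge_of_far:
  assumes "x \<in> V" "r \<le> d p y" "d x y \<le> r" "x = y \<or> d p x = 2 * r"
  shows "r \<le> gromov_product p x y"
  using assms gdist_self[OF assms(1)] unfolding gromov_product_def by auto

end

lemma crossing_index:
  fixes f :: "nat \<Rightarrow> nat"
  assumes "f 0 \<le> j" "j < f n"
  shows "\<exists>i<n. f i \<le> j \<and> j < f (Suc i)"
  using assms
proof (induction n)
  case (Suc n)
  then show ?case
    by (cases "j < f n") (auto intro: less_SucI)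
qed simp

text \<open>The two cases of the theorem are the instances \<open>(\<mu>, 0)\<close> and \<open>(1, \<epsilon>)\<close> of this locale.\<close>

locale short_path_pair = graph_metric +
  fixes P1 P2 :: "'a list" and \<mu> \<epsilon> :: real
  assumes P1_walk: "is_walk V E P1" and P1_geodesic: "plen P1 = d (hd P1) (last P1)"
    and P2_walk: "is_walk V E P2" and P2_distinct: "distinct P2"
    and same_hd: "hd P2 = hd P1" and same_last: "last P2 = last P1"
    and \<mu>_nonneg: "0 \<le> \<mu>" and \<epsilon>_nonneg: "0 \<le> \<epsilon>"
    and P2_short: "\<And>s t. s \<le> t \<Longrightarrow> t < length P2 \<Longrightarrow> real (t - s) \<le> \<mu> * d (P2 ! s) (P2 ! t) + \<epsilon>"
begin

abbreviation g :: "nat \<Rightarrow> 'a" where "g i \<equiv> P1 ! i"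
abbreviation c :: "nat \<Rightarrow> 'a" where "c j \<equiv> P2 ! j"
abbreviation n :: nat where "n \<equiv> plen P1"
abbreviation m :: nat where "m \<equiv> plen P2"

lemma length_P1: "length P1 = Suc n" and length_P2: "length P2 = Suc m"
  using P1_walk P2_walk by (auto simp: is_walk_def plen_def)

lemma set_P1: "set P1 = g ` {..n}" and set_P2: "set P2 = c ` {..m}"
  using length_P1 length_P2 by (auto simp: set_conv_nth image_iff less_Suc_eq_le)

lemma g_in_V: "i \<le> n \<Longrightarrow> g i \<in> V" and c_in_V: "j \<le> m \<Longrightarrow> c j \<in> V"
  using P1_walk P2_walk set_P1 set_P2 by (auto simp: is_walk_def)

lemma hd_P1: "hd P1 = g 0" and last_P1: "last P1 = g n"
  and hd_P2: "hd P2 = c 0" and last_P2: "last P2 = c m"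
proof -
  have "P1 \<noteq> []" "P2 \<noteq> []"
    using length_P1 length_P2 by auto
  then show "hd P1 = g 0" "last P1 = g n" "hd P2 = c 0" "last P2 = c m"
    using length_P1 length_P2 by (simp_all add: hd_conv_nth last_conv_nth)
qed

lemma first_eq: "c 0 = g 0" and last_eq: "c m = g n"
  using same_hd same_last hd_P1 last_P1 hd_P2 last_P2 by auto

lemma gdist_P1_nth:
  assumes "i \<le> j" "j \<le> n"
  shows "d (g i) (g j) = j - i"
proof -
  have "n = d (g 0) (g n)"
    using P1_geodesic hd_P1 last_P1 by simp
  also have "\<dots> \<le> d (g 0) (g i) + d (g i) (g j) + d (g j) (g n)"
    using gdist_triangle[of "g 0" "g i" "g n"] gdist_triangle[of "g i" "g j" "g n"] g_in_V assms
    by fastforce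
  finally show ?thesis
    using gdist_nth_le[OF P1_walk, of 0 i] gdist_nth_le[OF P1_walk, of i j]
      gdist_nth_le[OF P1_walk, of j n] assms length_P1 by linarith
qed

lemma gdist_P2_nth_le: "i \<le> j \<Longrightarrow> j \<le> m \<Longrightarrow> d (c i) (c j) \<le> j - i"
  using gdist_nth_le[OF P2_walk] length_P2 by simp

lemma P2_short_sym:
  assumes "s \<le> m" "t \<le> m"
  shows "\<bar>real t - real s\<bar> \<le> \<mu> * d (c s) (c t) + \<epsilon>"
  using P2_short[of s t] P2_short[of t s] gdist_sym[OF c_in_V c_in_V, of s t] assms length_P2
  by (cases "s \<le> t") auto

lemma plen_P2_eq_0: "n = 0 \<Longrightarrow> m = 0"
  using first_eq last_eq P2_distinct length_P2 nth_eq_iff_index_eq[of P2 0 m] by simp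

definition dist_to_P2 :: "'a \<Rightarrow> nat" where
  "dist_to_P2 v = Min ((\<lambda>j. d v (c j)) ` {..m})"

definition deviation :: nat where
  "deviation = Max ((\<lambda>i. dist_to_P2 (g i)) ` {..n})"

lemma dist_to_P2_le: "j \<le> m \<Longrightarrow> dist_to_P2 v \<le> d v (c j)"
  unfolding dist_to_P2_def by (rule Min_le) auto

lemma dist_to_P2_attained: "\<exists>j\<le>m. d v (c j) = dist_to_P2 v"
proof -
  have "dist_to_P2 v \<in> (\<lambda>j. d v (c j)) ` {..m}"
    unfolding dist_to_P2_def by (rule Min_in) auto
  then show ?thesis by auto
qed

lemma dist_to_P2_le_deviation: "i \<le> n \<Longrightarrow> dist_to_P2 (g i) \<le> deviation"
  unfolding deviation_def by (rule Max_ge) auto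

lemma deviation_attained: "\<exists>k\<le>n. dist_to_P2 (g k) = deviation"
proof -
  have "deviation \<in> (\<lambda>i. dist_to_P2 (g i)) ` {..n}"
    unfolding deviation_def by (rule Max_in) auto
  then show ?thesis by auto
qed

lemma P2_index_near:
  assumes "i \<le> n"
  shows "\<exists>j\<le>m. d (g i) (c j) \<le> deviation \<and> (i = 0 \<longrightarrow> j = 0) \<and> (i = n \<longrightarrow> j = m)"
proof (cases "i = 0 \<or> i = n")
  case True
  then have "d (g i) (c (if i = 0 then 0 else m)) = 0"
    using first_eq last_eq plen_P2_eq_0 gdist_self g_in_V assms by auto
  then show ?thesis
    using True plen_P2_eq_0 by (intro exI[of _ "if i = 0 then 0 else m"]) auto
next
  case False
  then show ?thesis
    using dist_to_P2_attained[of "g i"] dist_to_P2_le_deviation[OF assms] by fastforce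
qed

lemma detour_bound:
  assumes p: "p \<in> V" and xy: "x \<in> V" "y \<in> V" and st: "s \<le> m" "t \<le> m"
    and start: "r \<le> gromov_product p x (c s)" and finish: "r \<le> gromov_product p (c t) y"
    and far: "\<And>j. j \<le> m \<Longrightarrow> r + 1/2 \<le> d p (c j)"
  shows "r - \<delta> * (log 2 (\<bar>real t - real s\<bar> + 2) + 1) \<le> gromov_product p x y"
proof -
  define N where "N = (if s \<le> t then t - s else s - t)"
  define idx where "idx i = (if s \<le> t then s + i else s - i)" for i
  have idx: "\<And>i. i \<le> N \<Longrightarrow> idx i \<le> m" "idx 0 = s" "idx N = t"
    and idx_step: "\<And>i. i < N \<Longrightarrow> idx (Suc i) = Suc (idx i) \<or> idx i = Suc (idx (Suc i))"
    using st unfolding N_def idx_def by auto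
  define z where "z i = (if i = 0 then x else if i \<le> Suc N then c (idx (i - 1)) else y)" for i
  have z_in_V: "z i \<in> V" if "i \<le> N + 2" for i
    unfolding z_def using xy idx(1) c_in_V by auto
  have step: "r \<le> gromov_product p (z i) (z (Suc i))" if i: "i < N + 2" for i
  proof (cases "i = 0 \<or> i = Suc N")
    case True
    then show ?thesis
      using start finish idx unfolding z_def by auto
  next
    case False
    then obtain j where j: "i = Suc j" "j < N"
      using i by (cases i) auto
    have "idx j \<le> m" "idx (Suc j) \<le> m"
      using idx(1) j(2) by auto
    have adjacent: "d (c (idx j)) (c (idx (Suc j))) \<le> 1"
      using idx_step[OF j(2)]
    proof
      assume "idx (Suc j) = Suc (idx j)"
      then show ?thesis
        using gdist_P2_nth_le[of "idx j" "idx (Suc j)"] \<open>idx (Suc j) \<le> m\<close> by simp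
    next
      assume "idx j = Suc (idx (Suc j))"
      then show ?thesis
        using gdist_P2_nth_le[of "idx (Suc j)" "idx j"] \<open>idx j \<le> m\<close>
          gdist_sym[OF c_in_V c_in_V, of "idx j" "idx (Suc j)"] by simp
    qed
    have "z i = c (idx j)" "z (Suc i) = c (idx (Suc j))"
      unfolding z_def using j by auto
    then show ?thesis
      using far[of "idx j"] far[of "idx (Suc j)"] adjacent \<open>idx j \<le> m\<close> \<open>idx (Suc j) \<le> m\<close>
      unfolding gromov_product_def by simp
  qed
  have eq: "real (N + 2) = \<bar>real t - real s\<bar> + 2"
    unfolding N_def by auto
  have ends: "z 0 = x" "z (N + 2) = y"
    unfolding z_def by auto
  have "r - \<delta> * (log 2 (real (N + 2)) + 1) \<le> gromov_product p (z 0) (z (N + 2))"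
    by (rule gromov_product_chain_log[OF p]) (use z_in_V step in auto)
  then show ?thesis
    unfolding eq ends .
qed

lemma P2_index_gap:
  assumes "a \<le> b" "b \<le> n" "b - a \<le> 4 * deviation" "s \<le> m" "t \<le> m"
    and "d (g a) (c s) \<le> deviation" "d (g b) (c t) \<le> deviation"
  shows "\<bar>real t - real s\<bar> \<le> 6 * \<mu> * deviation + \<epsilon>"
proof -
  have V: "g a \<in> V" "g b \<in> V" "c s \<in> V" "c t \<in> V"
    using g_in_V c_in_V assms by auto
  have "d (c s) (c t) \<le> d (c s) (g a) + d (g a) (g b) + d (g b) (c t)"
    using gdist_triangle3 V by blast
  also have "\<dots> \<le> 6 * deviation"
    using assms gdist_P1_nth[of a b] gdist_sym[of "c s" "g a"] V by simp
  finally have "\<mu> * d (c s) (c t) \<le> \<mu> * (6 * deviation)"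
    using \<mu>_nonneg by (intro mult_left_mono) auto
  then show ?thesis
    using P2_short_sym[OF assms(4,5)] by simp
qed

lemma deviation_log_bound:
  "deviation \<le> 1/2 + \<delta> + \<delta> * log 2 (6 * \<mu> * deviation + \<epsilon> + 2)"
proof -
  obtain k where k: "k \<le> n" "dist_to_P2 (g k) = deviation"
    using deviation_attained by blast
  have far: "deviation \<le> d (g k) (c j)" if "j \<le> m" for j
    using dist_to_P2_le[OF that, of "g k"] k(2) by simp
  define a where "a = k - min k (2 * deviation)"
  define b where "b = min n (k + 2 * deviation)"
  have ab: "a \<le> k" "k \<le> b" "b \<le> n" "b - a \<le> 4 * deviation"
    and a_cases: "a = 0 \<or> k - a = 2 * deviation" and b_cases: "b = n \<or> b - k = 2 * deviation"
    unfolding a_def b_def using k by auto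
  obtain s where s: "s \<le> m" "d (g a) (c s) \<le> deviation" "a = 0 \<longrightarrow> s = 0"
    using P2_index_near[of a] ab by auto
  obtain t where t: "t \<le> m" "d (g b) (c t) \<le> deviation" "b = n \<longrightarrow> t = m"
    using P2_index_near[of b] ab by auto
  have V: "g k \<in> V" "g a \<in> V" "g b \<in> V" "c s \<in> V" "c t \<in> V"
    using g_in_V c_in_V ab k s t by auto
  have dist_k: "d (g k) (g a) = k - a" "d (g k) (g b) = b - k" "d (g a) (g b) = b - a"
    using gdist_P1_nth ab gdist_sym[of "g k" "g a"] V by auto
  have start: "deviation \<le> gromov_product (g k) (g a) (c s)"
    using s first_eq dist_k a_cases by (intro gromov_product_ge_of_far V far) auto
  have "deviation \<le> gromov_product (g k) (g b) (c t)"
    using t last_eq dist_k b_cases by (intro gromov_product_ge_of_far V far) auto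
  then have finish: "deviation \<le> gromov_product (g k) (c t) (g b)"
    using gromov_product_commute V by simp
  have "real deviation - 1/2 - \<delta> * (log 2 (\<bar>real t - real s\<bar> + 2) + 1)
      \<le> gromov_product (g k) (g a) (g b)"
    using start finish far by (intro detour_bound V s(1) t(1)) auto
  also have "gromov_product (g k) (g a) (g b) = 0"
    using dist_k ab unfolding gromov_product_def by simp
  finally have dev: "real deviation \<le> 1/2 + \<delta> + \<delta> * log 2 (\<bar>real t - real s\<bar> + 2)"
    by (simp add: algebra_simps)
  have "\<bar>real t - real s\<bar> \<le> 6 * \<mu> * deviation + \<epsilon>"
    using ab s t by (intro P2_index_gap) auto
  then have "log 2 (\<bar>real t - real s\<bar> + 2) \<le> log 2 (6 * \<mu> * deviation + \<epsilon> + 2)"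
    by simp
  then show ?thesis
    using dev delta_worst_nonneg[OF V(1)] mult_left_mono by fastforce
qed

lemma segment_vertex_near_P1:
  assumes "i < n" "p \<le> j" "j \<le> q" "q \<le> m"
    and "d (g i) (c p) \<le> deviation" "d (g (Suc i)) (c q) \<le> deviation"
  shows "\<exists>i'\<le>n. real (d (g i') (c j)) \<le> deviation + (\<mu> * (2 * deviation + 1) + \<epsilon>) / 2"
proof -
  have V: "g i \<in> V" "g (Suc i) \<in> V" "c p \<in> V" "c j \<in> V" "c q \<in> V"
    using assms g_in_V c_in_V by auto
  have "d (c p) (c q) \<le> d (c p) (g i) + d (g i) (g (Suc i)) + d (g (Suc i)) (c q)"
    using gdist_triangle3 V by blast
  also have "\<dots> \<le> 2 * deviation + 1"
    using assms gdist_P1_nth[of i "Suc i"] gdist_sym[of "c p" "g i"] V by simp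
  finally have "\<mu> * d (c p) (c q) \<le> \<mu> * (2 * deviation + 1)"
    using \<mu>_nonneg by (intro mult_left_mono) auto
  then have "real (q - p) \<le> \<mu> * (2 * deviation + 1) + \<epsilon>"
    using P2_short[of p q] assms length_P2 by simp
  then have gap: "real (q - p) / 2 \<le> (\<mu> * (2 * deviation + 1) + \<epsilon>) / 2"
    by simp
  have near_i: "d (g i) (c j) \<le> deviation + (j - p)"
    using gdist_triangle[of "g i" "c p" "c j"] gdist_P2_nth_le[of p j] assms V by simp
  have near_Suc_i: "d (g (Suc i)) (c j) \<le> deviation + (q - j)"
    using gdist_triangle[of "g (Suc i)" "c q" "c j"] gdist_P2_nth_le[of j q] gdist_sym[of "c j" "c q"] assms V
    by simp
  show ?thesis
  proof (cases "2 * (j - p) \<le> q - p")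
    case True
    then have "real (2 * d (g i) (c j)) \<le> real (2 * deviation + (q - p))"
      using near_i by linarith
    then have "real (d (g i) (c j)) \<le> deviation + (\<mu> * (2 * deviation + 1) + \<epsilon>) / 2"
      using gap by (simp only: of_nat_mult of_nat_add of_nat_numeral)
    then show ?thesis
      using assms(1) by (intro exI[of _ i]) auto
  next
    case False
    then have "real (2 * d (g (Suc i)) (c j)) \<le> real (2 * deviation + (q - p))"
      using near_Suc_i assms(2,3) by linarith
    then have "real (d (g (Suc i)) (c j)) \<le> deviation + (\<mu> * (2 * deviation + 1) + \<epsilon>) / 2"
      using gap by (simp only: of_nat_mult of_nat_add of_nat_numeral)
    then show ?thesis
      using assms(1) by (intro exI[of _ "Suc i"]) auto
  qed
qed

lemma P2_vertex_near_P1: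
  assumes "j \<le> m"
  shows "\<exists>i\<le>n. real (d (g i) (c j)) \<le> deviation + (\<mu> * (2 * deviation + 1) + \<epsilon>) / 2"
proof (cases "j = m")
  case True
  then have "d (g n) (c j) = 0"
    using last_eq gdist_self g_in_V by simp
  then show ?thesis
    using \<mu>_nonneg \<epsilon>_nonneg by (intro exI[of _ n]) auto
next
  case False
  have "\<forall>i. \<exists>j. i \<le> n \<longrightarrow> j \<le> m \<and> d (g i) (c j) \<le> deviation \<and> (i = 0 \<longrightarrow> j = 0) \<and> (i = n \<longrightarrow> j = m)"
    using P2_index_near by blast
  then obtain \<sigma> where \<sigma>: "\<And>i. i \<le> n \<Longrightarrow> \<sigma> i \<le> m \<and> d (g i) (c (\<sigma> i)) \<le> deviation"
    and \<sigma>_ends: "\<sigma> 0 = 0" "\<sigma> n = m"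
    by (metis le0 order.refl)
  obtain i where "i < n" "\<sigma> i \<le> j" "j < \<sigma> (Suc i)"
    using crossing_index[of \<sigma> j n] \<sigma>_ends assms False by auto
  then show ?thesis
    using \<sigma>[of i] \<sigma>[of "Suc i"] segment_vertex_near_P1[of i "\<sigma> i" j "\<sigma> (Suc i)"] by auto
qed

lemma P2_vertex_near_ends:
  assumes "j \<le> m"
  shows "\<exists>i\<le>n. real (d (g i) (c j)) \<le> (\<mu> * d (g 0) (g n) + \<epsilon>) / 2"
proof -
  have half: "real m / 2 \<le> (\<mu> * d (g 0) (g n) + \<epsilon>) / 2"
    using P2_short[of 0 m] first_eq last_eq length_P2 by simp
  show ?thesis
  proof (cases "2 * j \<le> m")
    case True
    have "d (g 0) (c j) \<le> j"
      using gdist_P2_nth_le[of 0 j] first_eq assms by simp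
    then have "real (d (g 0) (c j)) \<le> real m / 2"
      using True by linarith
    then show ?thesis
      using half by (intro exI[of _ 0]) auto
  next
    case False
    have "d (g n) (c j) \<le> m - j"
      using gdist_P2_nth_le[of j m] last_eq gdist_sym[of "c j" "c m"] c_in_V g_in_V assms by simp
    then have "real (d (g n) (c j)) \<le> real m / 2"
      using False by linarith
    then show ?thesis
      using half by (intro exI[of _ n]) auto
  qed
qed

lemma Hausdorff_bounds:
  assumes \<eta>: "0 < \<eta>" "4 * \<delta> \<le> \<eta>" "1/2 + \<delta> + \<delta> * log 2 (6 * \<mu> * \<eta> + \<epsilon> + 2) \<le> \<eta>"
  shows "\<forall>v\<in>set P1. \<exists>v'\<in>set P2. int (d v v') \<le> \<lfloor>\<eta>\<rfloor>"
    and "\<forall>v'\<in>set P2. \<exists>v\<in>set P1. int (d v v') \<le>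
           min \<lfloor>(\<mu> + 1) * \<eta> + (\<mu> + \<epsilon>) / 2\<rfloor> \<lfloor>(\<mu> * real (d (hd P1) (last P1)) + \<epsilon>) / 2\<rfloor>"
proof -
  have D_le: "deviation \<le> 1/2 + \<delta> + \<delta> * log 2 (6 * \<mu> * deviation + (\<epsilon> + 2))"
    and \<eta>_ge: "1/2 + \<delta> + \<delta> * log 2 (6 * \<mu> * \<eta> + (\<epsilon> + 2)) \<le> \<eta>"
    using deviation_log_bound \<eta>(3) by (simp_all add: add.assoc)
  have dev: "deviation \<le> \<eta>"
    using \<mu>_nonneg \<epsilon>_nonneg
    by (intro le_of_log_fixpoint[OF delta_worst_nonneg[OF g_in_V[of 0]] _ _ \<eta>(1,2) D_le \<eta>_ge]) auto
  show "\<forall>v\<in>set P1. \<exists>v'\<in>set P2. int (d v v') \<le> \<lfloor>\<eta>\<rfloor>"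
  proof
    fix v assume "v \<in> set P1"
    then obtain i where "i \<le> n" "v = g i"
      using set_P1 by auto
    then obtain j where "j \<le> m" "d v (c j) \<le> deviation"
      using P2_index_near by blast
    then show "\<exists>v'\<in>set P2. int (d v v') \<le> \<lfloor>\<eta>\<rfloor>"
      using dev set_P2 by (intro bexI[of _ "c j"]) (auto simp: le_floor_iff)
  qed
  show "\<forall>v'\<in>set P2. \<exists>v\<in>set P1. int (d v v') \<le>
           min \<lfloor>(\<mu> + 1) * \<eta> + (\<mu> + \<epsilon>) / 2\<rfloor> \<lfloor>(\<mu> * real (d (hd P1) (last P1)) + \<epsilon>) / 2\<rfloor>"
  proof
    fix v' assume "v' \<in> set P2"
    then obtain j where j: "j \<le> m" "v' = c j"
      using set_P2 by auto
    show "\<exists>v\<in>set P1. int (d v v') \<le>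
           min \<lfloor>(\<mu> + 1) * \<eta> + (\<mu> + \<epsilon>) / 2\<rfloor> \<lfloor>(\<mu> * real (d (hd P1) (last P1)) + \<epsilon>) / 2\<rfloor>"
    proof (cases "\<lfloor>(\<mu> + 1) * \<eta> + (\<mu> + \<epsilon>) / 2\<rfloor> \<le> \<lfloor>(\<mu> * real (d (hd P1) (last P1)) + \<epsilon>) / 2\<rfloor>")
      case True
      obtain i where i: "i \<le> n" "real (d (g i) v') \<le> deviation + (\<mu> * (2 * deviation + 1) + \<epsilon>) / 2"
        using P2_vertex_near_P1 j by blast
      have "\<mu> * (2 * deviation + 1) \<le> \<mu> * (2 * \<eta> + 1)"
        using dev \<mu>_nonneg by (intro mult_left_mono) auto
      then have "(\<mu> * (2 * deviation + 1) + \<epsilon>) / 2 \<le> (\<mu> * (2 * \<eta> + 1) + \<epsilon>) / 2"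
        by simp
      then have "real (d (g i) v') \<le> \<eta> + (\<mu> * (2 * \<eta> + 1) + \<epsilon>) / 2"
        using i(2) dev by linarith
      also have "\<dots> = (\<mu> + 1) * \<eta> + (\<mu> + \<epsilon>) / 2"
        by (simp add: algebra_simps)
      finally have "int (d (g i) v') \<le> \<lfloor>(\<mu> + 1) * \<eta> + (\<mu> + \<epsilon>) / 2\<rfloor>"
        by (simp add: le_floor_iff)
      then show ?thesis
        using True i(1) set_P1 by (intro bexI[of _ "g i"]) auto
    next
      case False
      obtain i where i: "i \<le> n" "real (d (g i) v') \<le> (\<mu> * d (g 0) (g n) + \<epsilon>) / 2"
        using P2_vertex_near_ends j by blast
      then have "int (d (g i) v') \<le> \<lfloor>(\<mu> * real (d (hd P1) (last P1)) + \<epsilon>) / 2\<rfloor>"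
        using hd_P1 last_P1 by (simp add: le_floor_iff)
      then show ?thesis
        using False i(1) set_P1 by (intro bexI[of _ "g i"]) auto
    qed
  qed
qed

end

theorem theorem6:
  fixes V :: "'a set" and E :: "'a \<Rightarrow> 'a \<Rightarrow> bool"
    and P1 P2 :: "'a list" and u0 u1 :: 'a and \<mu> \<epsilon> :: real
  assumes G: "graph V E" and conn: "connected_graph V E" and n4: "card V \<ge> 4"
    and P1: "is_path V E P1" "hd P1 = u0" "last P1 = u1" "plen P1 = gdist V E u0 u1"
    and P2: "is_path V E P2" "hd P2 = u0" "last P2 = u1"
  shows
    "(\<mu> \<ge> 1 \<and> mu_approx_short V E \<mu> P2 \<longrightarrow>
       (let \<eta> = eta_mu (delta_worst V E) \<mu> in
         (\<forall>v\<in>set P1. \<exists>v'\<in>set P2. int (gdist V E v v') \<le> \<lfloor>\<eta>\<rfloor>) \<and>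
         (\<forall>v'\<in>set P2. \<exists>v\<in>set P1. int (gdist V E v v') \<le>
             min \<lfloor>(\<mu>+1)*\<eta> + \<mu>/2\<rfloor> \<lfloor>\<mu> * real (gdist V E u0 u1) / 2\<rfloor>)))
   \<and> (\<epsilon> \<ge> 0 \<and> eps_additive_short V E \<epsilon> P2 \<longrightarrow>
       (let \<eta> = eta_eps (delta_worst V E) \<epsilon> in
         (\<forall>v\<in>set P1. \<exists>v'\<in>set P2. int (gdist V E v v') \<le> \<lfloor>\<eta>\<rfloor>) \<and>
         (\<forall>v'\<in>set P2. \<exists>v\<in>set P1. int (gdist V E v v') \<le>
             min \<lfloor>2*\<eta> + (1+\<epsilon>)/2\<rfloor> \<lfloor>(real (gdist V E u0 u1) + \<epsilon>) / 2\<rfloor>)))"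
proof -
  interpret graph_metric V E
    using G conn by unfold_locales
  have walks: "is_walk V E P1" "is_walk V E P2" "distinct P2"
    using P1(1) P2(1) by (auto simp: is_path_def)
  have \<delta>: "0 \<le> delta_worst V E"
    using delta_worst_nonneg[of "hd P1"] walks(1) unfolding is_walk_def by (metis hd_in_set subsetD)
  have mu_pair: "short_path_pair V E P1 P2 \<mu> 0" if "1 \<le> \<mu>" "mu_approx_short V E \<mu> P2"
    using G conn walks P1 P2 that mu_approx_short_subpath[where xs = P2 and \<mu> = \<mu>] by unfold_locales auto
  have eps_pair: "short_path_pair V E P1 P2 1 \<epsilon>" if "0 \<le> \<epsilon>" "eps_additive_short V E \<epsilon> P2"
    using G conn walks P1 P2 that eps_additive_short_subpath[where xs = P2 and \<epsilon> = \<epsilon>] by unfold_locales auto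
  show ?thesis
    using short_path_pair.Hausdorff_bounds[OF mu_pair, of "eta_mu (delta_worst V E) \<mu>"]
      short_path_pair.Hausdorff_bounds[OF eps_pair, of "eta_eps (delta_worst V E) \<epsilon>"]
      eta_mu_conditions[OF \<delta>, of \<mu>] eta_eps_conditions[OF \<delta>, of \<epsilon>] P1
    by (auto simp: Let_def)
qed

end
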